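(* Let $n\ge3$ and let $W$ be a real $2$-plane in $\mathbb{H}^n$ which is not contained in a quaternion line. Then the orbit $\mathbb{G}\equiv\mathrm{Sp}(n)\cdot\mathrm{Sp}(1)\cdot W$ has the transitivity property.
   Context: $\mathbb{H}^n=\mathbb{R}^{4n}$; $\mathrm{Sp}(n)$ acts by quaternion-linear isometries and $\mathrm{Sp}(1)$ by unit quaternion scalar multiplication. A set $\mathbb{G}$ of real planes has the transitivity property if for any two vectors $x,y\in\mathbb{H}^n$ there exist $W_1,\dots,W_k\in\mathbb{G}$ with $x\in W_1$, $y\in W_k$ and $\dim_{\mathbb{R}}(W_i\cap W_{i+1})>0$ for $i=1,\dots,k-1$. *)

theory Defs
  imports "HOL-Analysis.Analysis"
begin

text \<open>Quaternions are modelled as real^4 with components q$1 (real part), q$2, q$3, q$4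
  (coefficients of i, j, k).  The quaternion space H^n is real^4^'n, which as a real
  Euclidean space is R^(4n) with its standard inner product.\<close>

definition qmul :: "real^4 \<Rightarrow> real^4 \<Rightarrow> real^4" where
  "qmul p q = (\<chi> i.
     if i = 1 then p$1*q$1 - p$2*q$2 - p$3*q$3 - p$4*q$4
     else if i = 2 then p$1*q$2 + p$2*q$1 + p$3*q$4 - p$4*q$3
     else if i = 3 then p$1*q$3 - p$2*q$4 + p$3*q$1 + p$4*q$2
     else p$1*q$4 + p$2*q$3 - p$3*q$2 + p$4*q$1)"

text \<open>Left scalar multiplication of a vector in H^n by a quaternion (the H-module structure),
  and right multiplication by a quaternion (the Sp(1) action).\<close>

definition hlmul :: "real^4 \<Rightarrow> real^4^'n \<Rightarrow> real^4^'n" where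
  "hlmul l x = (\<chi> i. qmul l (x$i))"

definition hrmul :: "real^4^'n \<Rightarrow> real^4 \<Rightarrow> real^4^'n" where
  "hrmul x q = (\<chi> i. qmul (x$i) q)"

definition Sp :: "(real^4^'n \<Rightarrow> real^4^'n) set" where
  "Sp = {f. linear f \<and> (\<forall>l x. f (hlmul l x) = hlmul l (f x)) \<and> (\<forall>x. norm (f x) = norm x)}"

definition orbit_SpSp1 :: "(real^4^'n) set \<Rightarrow> (real^4^'n) set set" where
  "orbit_SpSp1 W = {f ` ((\<lambda>x. hrmul x q) ` W) | f q. f \<in> Sp \<and> norm q = 1}"

definition real_plane :: "(real^4^'n) set \<Rightarrow> bool" where
  "real_plane W \<longleftrightarrow> subspace W \<and> dim W = 2"

definition quaternion_line :: "(real^4^'n) set \<Rightarrow> bool" where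
  "quaternion_line L \<longleftrightarrow> (\<exists>v. v \<noteq> 0 \<and> L = {hlmul l v | l. True})"

definition transitivity_property :: "(real^4^'n) set set \<Rightarrow> bool" where
  "transitivity_property G \<longleftrightarrow>
     (\<forall>x y. \<exists>Ws. Ws \<noteq> [] \<and> set Ws \<subseteq> G \<and> x \<in> hd Ws \<and> y \<in> last Ws \<and>
        (\<forall>i. Suc i < length Ws \<longrightarrow> dim (Ws!i \<inter> Ws!Suc i) > 0))"

end

theory Submission
  imports Defs
begin

text \<open>Sp(n) acts transitively on pairs of unit vectors with a prescribed quaternionic
  Hermitian product c, provided |c| < 1. For an orthonormal basis u, w of W we have
  |hinner u w| < 1 because W does not lie in a quaternion line, so every pair of unit
  vectors with Hermitian product hinner u w lies in one plane of the orbit. For orthonormal x, y and a small angle \<theta>, the vector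
  x' = cos \<theta> x + sin \<theta> y and a suitable unit vector z, which exists because n \<ge> 3, satisfy
  hinner x z = hinner x' z = hinner u w; so two planes of the orbit link x to x'.
  Finitely many such rotations link x to y, and any two vectors are orthogonal to a
  common unit vector.\<close>

section \<open>Quaternions\<close>

definition qone :: "real^4" where
  "qone = (\<chi> i. if i = 1 then 1 else 0)"

definition qconj :: "real^4 \<Rightarrow> real^4" where
  "qconj q = (\<chi> i. if i = 1 then q$1 else - q$i)"

lemma qmul_nth:
  "qmul p q $ 1 = p$1*q$1 - p$2*q$2 - p$3*q$3 - p$4*q$4"
  "qmul p q $ 2 = p$1*q$2 + p$2*q$1 + p$3*q$4 - p$4*q$3"
  "qmul p q $ 3 = p$1*q$3 - p$2*q$4 + p$3*q$1 + p$4*q$2"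
  "qmul p q $ 4 = p$1*q$4 + p$2*q$3 - p$3*q$2 + p$4*q$1"
  by (simp_all add: qmul_def)

lemma qone_nth [simp]: "qone$1 = 1" "qone$2 = 0" "qone$3 = 0" "qone$4 = 0"
  by (simp_all add: qone_def)

lemma qconj_nth [simp]: "qconj q$1 = q$1" "qconj q$2 = - q$2" "qconj q$3 = - q$3" "qconj q$4 = - q$4"
  by (simp_all add: qconj_def)

lemma vec4_eq_iff: "(a::real^4) = b \<longleftrightarrow> a$1 = b$1 \<and> a$2 = b$2 \<and> a$3 = b$3 \<and> a$4 = b$4"
  by (auto simp: vec_eq_iff forall_4)

lemma norm4_square: "(norm (a::real^4))^2 = a$1^2 + a$2^2 + a$3^2 + a$4^2"
  by (simp add: norm_vec_def L2_set_def sum_4)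

lemma qmul_assoc: "qmul (qmul a b) c = qmul a (qmul b c)"
  by (simp add: vec4_eq_iff qmul_nth algebra_simps)

lemma qmul_add_left: "qmul (a + b) c = qmul a c + qmul b c"
  and qmul_add_right: "qmul c (a + b) = qmul c a + qmul c b"
  and qmul_diff_left: "qmul (a - b) c = qmul a c - qmul b c"
  and qmul_diff_right: "qmul c (a - b) = qmul c a - qmul c b"
  and qmul_minus_left: "qmul (- a) c = - qmul a c"
  and qmul_scaleR_left: "qmul (r *\<^sub>R a) c = r *\<^sub>R qmul a c"
  and qmul_scaleR_right: "qmul c (r *\<^sub>R a) = r *\<^sub>R qmul c a"
  by (simp_all add: vec4_eq_iff qmul_nth algebra_simps)

lemma qmul_zero_left [simp]: "qmul 0 c = 0"
  and qmul_zero_right [simp]: "qmul c 0 = 0"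
  and qmul_qone_left [simp]: "qmul qone c = c"
  and qmul_qone_right [simp]: "qmul c qone = c"
  by (simp_all add: vec4_eq_iff qmul_nth)

lemma qconj_qmul: "qconj (qmul a b) = qmul (qconj b) (qconj a)"
  by (simp add: vec4_eq_iff qmul_nth algebra_simps)

lemma qconj_qconj [simp]: "qconj (qconj a) = a"
  and qconj_add: "qconj (a + b) = qconj a + qconj b"
  and qconj_diff: "qconj (a - b) = qconj a - qconj b"
  and qconj_scaleR: "qconj (r *\<^sub>R a) = r *\<^sub>R qconj a"
  and qconj_zero [simp]: "qconj 0 = 0"
  and qconj_qone [simp]: "qconj qone = qone"
  by (simp_all add: vec4_eq_iff)

lemma qmul_qconj_right: "qmul a (qconj a) = (norm a)^2 *\<^sub>R qone"
  and qmul_qconj_left: "qmul (qconj a) a = (norm a)^2 *\<^sub>R qone"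
  unfolding vec4_eq_iff qmul_nth norm4_square by (simp_all add: power2_eq_square)

lemma norm_qconj [simp]: "norm (qconj a) = norm a"
  by (simp add: norm_eq_sqrt_inner inner_vec_def sum_4)

lemma norm_qone [simp]: "norm qone = 1"
  by (simp add: norm_eq_sqrt_inner inner_vec_def sum_4)

lemma qmul_sum_left: "qmul (sum f S) c = (\<Sum>i\<in>S. qmul (f i) c)"
  by (induct S rule: infinite_finite_induct) (simp_all add: qmul_add_left)

lemma qmul_sum_right: "qmul c (sum f S) = (\<Sum>i\<in>S. qmul c (f i))"
  by (induct S rule: infinite_finite_induct) (simp_all add: qmul_add_right)

lemma qconj_sum: "qconj (sum f S) = (\<Sum>i\<in>S. qconj (f i))"
  by (induct S rule: infinite_finite_induct) (simp_all add: qconj_add)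

section \<open>The Hermitian product on H^n\<close>

definition hinner :: "real^4^'n \<Rightarrow> real^4^'n \<Rightarrow> real^4" where
  "hinner x y = (\<Sum>i\<in>UNIV. qmul (x$i) (qconj (y$i)))"

lemma hlmul_nth [simp]: "hlmul l x $ i = qmul l (x$i)"
  by (simp add: hlmul_def)

lemma hinner_add_left: "hinner (x + y) z = hinner x z + hinner y z"
  by (simp add: hinner_def qmul_add_left sum.distrib)

lemma hinner_add_right: "hinner z (x + y) = hinner z x + hinner z y"
  by (simp add: hinner_def qmul_add_right qconj_add sum.distrib)

lemma hinner_diff_left: "hinner (x - y) z = hinner x z - hinner y z"
  by (simp add: hinner_def qmul_diff_left sum_subtractf)

lemma hinner_diff_right: "hinner z (x - y) = hinner z x - hinner z y"
  by (simp add: hinner_def qmul_diff_right qconj_diff sum_subtractf)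

lemma hinner_scaleR_left: "hinner (r *\<^sub>R x) y = r *\<^sub>R hinner x y"
  by (simp add: hinner_def qmul_scaleR_left scaleR_sum_right)

lemma hinner_scaleR_right: "hinner x (r *\<^sub>R y) = r *\<^sub>R hinner x y"
  by (simp add: hinner_def qmul_scaleR_right qconj_scaleR scaleR_sum_right)

lemma hinner_zero_left [simp]: "hinner 0 y = 0"
  and hinner_zero_right [simp]: "hinner x 0 = 0"
  by (simp_all add: hinner_def)

lemma hinner_hlmul_left: "hinner (hlmul l x) y = qmul l (hinner x y)"
  by (simp add: hinner_def qmul_assoc qmul_sum_right)

lemma hinner_hlmul_right: "hinner x (hlmul l y) = qmul (hinner x y) (qconj l)"
  by (simp add: hinner_def qmul_assoc qmul_sum_left qconj_qmul)

lemma hinner_commute: "hinner y x = qconj (hinner x y)"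
  by (simp add: hinner_def qconj_sum qconj_qmul)

lemma inner_eq_hinner: "x \<bullet> y = hinner x y $ 1"
  by (simp add: hinner_def inner_vec_def qmul_nth sum_4)

lemma hinner_self: "hinner x x = (norm x)^2 *\<^sub>R qone"
proof -
  have "hinner x x = (\<Sum>i\<in>UNIV. (norm (x$i))^2) *\<^sub>R qone"
    by (simp add: hinner_def qmul_qconj_right scaleR_sum_left)
  also have "(\<Sum>i\<in>UNIV. (norm (x$i))^2) = (norm x)^2"
    by (simp add: norm_vec_def L2_set_def sum_nonneg)
  finally show ?thesis .
qed

lemma norm_eq_1_iff_hinner: "norm x = 1 \<longleftrightarrow> hinner x x = qone"
proof -
  have "norm x = 1 \<longleftrightarrow> (norm x)^2 = 1"
    by (smt (verit) norm_ge_zero power2_eq_1_iff)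
  then show ?thesis
    by (auto simp: hinner_self vec4_eq_iff)
qed

lemma hinner_orthonormal_combination:
  assumes "norm x = 1" "norm y = 1" "hinner x y = 0"
  shows "hinner (a *\<^sub>R x + b *\<^sub>R y) (c *\<^sub>R x + d *\<^sub>R y) = (a*c + b*d) *\<^sub>R qone"
proof -
  have "hinner y x = 0"
    using assms(3) by (simp add: hinner_commute[of y x])
  then show ?thesis
    using assms by (simp add: hinner_add_left hinner_add_right hinner_scaleR_left
        hinner_scaleR_right hinner_self scaleR_add_left mult.commute)
qed

lemma hlmul_assoc: "hlmul (qmul a b) x = hlmul a (hlmul b x)"
  and hlmul_add_left: "hlmul (a + b) x = hlmul a x + hlmul b x"
  and hlmul_add_right: "hlmul a (x + y) = hlmul a x + hlmul a y"
  and hlmul_minus_left: "hlmul (- a) x = - hlmul a x"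
  and hlmul_scaleR_left: "hlmul (r *\<^sub>R a) x = r *\<^sub>R hlmul a x"
  and hlmul_scaleR_right: "hlmul a (r *\<^sub>R x) = r *\<^sub>R hlmul a x"
  by (simp_all add: vec_eq_iff qmul_assoc qmul_add_left qmul_add_right qmul_minus_left
      qmul_scaleR_left qmul_scaleR_right)

lemma hlmul_qone [simp]: "hlmul qone x = x"
  and hlmul_zero_left [simp]: "hlmul 0 x = 0"
  and hlmul_zero_right [simp]: "hlmul a 0 = 0"
  by (simp_all add: vec_eq_iff)

section \<open>Transitivity properties of Sp(n)\<close>

lemma SpD:
  assumes "f \<in> Sp"
  shows Sp_linear: "linear f"
    and Sp_hlmul: "f (hlmul l x) = hlmul l (f x)"
    and Sp_norm: "norm (f x) = norm x"
  using assms by (simp_all add: Sp_def)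

lemma Sp_id: "id \<in> Sp"
  by (simp add: Sp_def linear_id)

lemma Sp_comp: "f \<in> Sp \<Longrightarrow> g \<in> Sp \<Longrightarrow> f \<circ> g \<in> Sp"
  by (simp add: Sp_def linear_compose)

lemma hinner_nth_eq_inner: "hinner x y $ k = hlmul (qconj (axis k 1)) x \<bullet> y"
proof -
  have "h $ k = qmul (qconj (axis k 1)) h $ 1" for h :: "real^4"
    using exhaust_4[of k] by (auto simp: qmul_nth axis_def)
  then show ?thesis
    by (simp add: inner_eq_hinner hinner_hlmul_left)
qed

lemma Sp_hinner:
  assumes f: "f \<in> Sp"
  shows "hinner (f x) (f y) = hinner x y"
proof -
  have inner: "f x \<bullet> f y = x \<bullet> y" for x y
    using f orthogonal_transformation[of f] by (simp add: Sp_def orthogonal_transformation_def)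
  have "hinner (f x) (f y) $ k = hinner x y $ k" for k
  proof -
    have "hinner (f x) (f y) $ k = f (hlmul (qconj (axis k 1)) x) \<bullet> f y"
      using f by (simp add: hinner_nth_eq_inner Sp_hlmul)
    then show ?thesis
      by (simp add: inner hinner_nth_eq_inner)
  qed
  then show ?thesis
    by (simp add: vec_eq_iff)
qed

text \<open>For a unit vector v, htwist v u multiplies the H-coordinate along v from the right by u
  and fixes the H-orthogonal complement of v.\<close>

definition htwist :: "real^4^'n \<Rightarrow> real^4 \<Rightarrow> real^4^'n \<Rightarrow> real^4^'n" where
  "htwist v u x = x + hlmul (qmul (hinner x v) (u - qone)) v"

lemma htwist_fixes: "hinner x v = 0 \<Longrightarrow> htwist v u x = x"
  by (simp add: htwist_def)

lemma htwist_hlmul: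
  assumes "norm v = 1"
  shows "htwist v u (hlmul l v) = hlmul (qmul l u) v"
proof -
  have "htwist v u (hlmul l v) = hlmul (l + qmul l (u - qone)) v"
    using assms by (simp add: htwist_def hinner_hlmul_left hlmul_add_left
        norm_eq_1_iff_hinner)
  then show ?thesis
    by (simp add: qmul_diff_right)
qed

lemma Sp_htwist:
  assumes v: "norm v = 1" and u: "norm u = 1"
  shows "htwist v u \<in> Sp"
proof -
  have "linear (htwist v u)"
    by (rule linearI) (simp_all add: htwist_def hinner_add_left hinner_scaleR_left
        qmul_add_left qmul_scaleR_left hlmul_add_left hlmul_scaleR_left scaleR_add_right)
  moreover have "htwist v u (hlmul l x) = hlmul l (htwist v u x)" for l x
    by (simp add: htwist_def hinner_hlmul_left qmul_assoc hlmul_assoc hlmul_add_right)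
  moreover have "norm (htwist v u x) = norm x" for x
  proof -
    define h where "h = hinner x v"
    define a where "a = qmul h (u - qone)"
    have vv: "hinner v v = qone"
      using v by (simp add: norm_eq_1_iff_hinner)
    have "hinner (htwist v u x) (htwist v u x)
        = hinner x x + (qmul h (qconj a) + qmul a (qconj h) + qmul a (qconj a))"
      by (simp add: htwist_def a_def h_def hinner_add_left hinner_add_right hinner_hlmul_left
          hinner_hlmul_right vv hinner_commute[of v x] qmul_add_left qmul_add_right)
    moreover have "(qmul h (qconj a) + qmul a (qconj h) + qmul a (qconj a)) $ 1
        = (norm h)^2 * ((norm u)^2 - 1)"
      unfolding a_def norm4_square by (simp add: qmul_nth power2_eq_square algebra_simps)
    ultimately have "(norm (htwist v u x))^2 = (norm x)^2"
      using u by (simp add: power2_norm_eq_inner inner_eq_hinner)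
    then show ?thesis
      by (simp add: power2_eq_iff_nonneg)
  qed
  ultimately show ?thesis
    by (simp add: Sp_def)
qed

text \<open>htwist v (-1) is the reflection orthogonal to v. As in the Euclidean Householder
  argument, the hypotheses make hinner p d real and equal to half of hinner d d.\<close>

lemma htwist_reflection_maps:
  assumes pp: "hinner p p = hinner p' p'" and sym: "hinner p p' = hinner p' p" and "p \<noteq> p'"
  defines "v \<equiv> (1 / norm (p - p')) *\<^sub>R (p - p')"
  shows "htwist v (- qone) p = p'"
proof -
  define d where "d = p - p'"
  define N where "N = norm d"
  have N: "N \<noteq> 0"
    using \<open>p \<noteq> p'\<close> by (simp add: N_def d_def)
  have "hinner d d = 2 *\<^sub>R hinner p d"
    using pp sym by (simp add: d_def hinner_diff_left hinner_diff_right scaleR_2)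
  then have "hinner p d = (1 / 2) *\<^sub>R hinner d d"
    by simp
  then have "hinner p d = (N^2 / 2) *\<^sub>R qone"
    by (simp add: hinner_self N_def)
  then have "qmul (hinner p v) (- qone - qone) = (- N) *\<^sub>R qone"
    using N by (simp add: v_def d_def[symmetric] N_def[symmetric] hinner_scaleR_right
        vec4_eq_iff qmul_nth power2_eq_square)
  then have "htwist v (- qone) p = p - d"
    using N by (simp add: htwist_def hlmul_minus_left hlmul_scaleR_left hlmul_scaleR_right v_def
        d_def[symmetric] N_def[symmetric])
  then show ?thesis
    by (simp add: d_def)
qed

lemma Sp_maps_hermitian_pair:
  assumes "hinner p p = hinner p' p'" and "hinner p p' = hinner p' p"
  shows "\<exists>g\<in>Sp. g p = p' \<and> (\<forall>x. hinner x p = 0 \<longrightarrow> hinner x p' = 0 \<longrightarrow> g x = x)"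
proof (cases "p = p'")
  case True
  then show ?thesis
    by (intro bexI[OF _ Sp_id]) simp
next
  case False
  define v where "v = (1 / norm (p - p')) *\<^sub>R (p - p')"
  have "htwist v (- qone) \<in> Sp"
    using False by (intro Sp_htwist) (simp_all add: v_def)
  moreover have "htwist v (- qone) p = p'"
    using htwist_reflection_maps[OF assms False] by (simp add: v_def)
  moreover have "htwist v (- qone) x = x" if "hinner x p = 0" "hinner x p' = 0" for x
    using that by (intro htwist_fixes) (simp add: v_def hinner_scaleR_right hinner_diff_right)
  ultimately show ?thesis
    by blast
qed

text \<open>Reflect p onto the multiple l q of q with l the phase of hinner p q, then twist the
  phase away.\<close>

lemma Sp_maps_unit:
  assumes p: "norm p = 1" and q: "norm q = 1"
  shows "\<exists>g\<in>Sp. g p = q \<and> (\<forall>x. hinner x p = 0 \<longrightarrow> hinner x q = 0 \<longrightarrow> g x = x)"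
proof -
  define c where "c = hinner p q"
  define l where "l = (if c = 0 then qone else (1 / norm c) *\<^sub>R c)"
  have l: "norm l = 1"
    by (simp add: l_def)
  have real_c: "hinner p (hlmul l q) = norm c *\<^sub>R qone"
    by (cases "c = 0") (simp_all add: l_def c_def[symmetric] hinner_hlmul_right qconj_scaleR
        qmul_scaleR_right qmul_qconj_right power2_eq_square)
  have ll: "qmul l (qconj l) = qone"
    using l by (simp add: qmul_qconj_right)
  have "hinner p p = hinner (hlmul l q) (hlmul l q)"
    using p q by (simp add: norm_eq_1_iff_hinner hinner_hlmul_left hinner_hlmul_right ll)
  moreover have "hinner p (hlmul l q) = hinner (hlmul l q) p"
    using real_c by (simp add: hinner_commute[of "hlmul l q" p] qconj_scaleR)
  ultimately obtain g where g: "g \<in> Sp" "g p = hlmul l q"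
    and g_fix: "\<And>x. hinner x p = 0 \<Longrightarrow> hinner x (hlmul l q) = 0 \<Longrightarrow> g x = x"
    using Sp_maps_hermitian_pair by blast
  define t where "t = htwist q (qconj l)"
  have t: "t \<in> Sp"
    using q l by (simp add: t_def Sp_htwist)
  have "t (g p) = q"
    using q by (simp add: t_def g(2) htwist_hlmul ll)
  moreover have "t (g x) = x" if "hinner x p = 0" "hinner x q = 0" for x
    using that by (simp add: g_fix hinner_hlmul_right t_def htwist_fixes)
  ultimately show ?thesis
    using Sp_comp[OF t g(1)] by (intro bexI[of _ "t \<circ> g"]) auto
qed

lemma hinner_orthogonal_component:
  assumes "norm p = 1"
  shows "hinner (w - hlmul (hinner w p) p) p = 0"
    and "(norm (w - hlmul (hinner w p) p))^2 = (norm w)^2 - (norm (hinner w p))^2"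
proof -
  have pp: "hinner p p = qone"
    using assms by (simp add: norm_eq_1_iff_hinner)
  show orth: "hinner (w - hlmul (hinner w p) p) p = 0"
    by (simp add: hinner_diff_left hinner_hlmul_left pp)
  have "hinner (hlmul (hinner w p) p) (w - hlmul (hinner w p) p) = 0"
    using orth by (simp add: hinner_hlmul_left hinner_commute[of p "w - hlmul (hinner w p) p"])
  then have "hinner (w - hlmul (hinner w p) p) (w - hlmul (hinner w p) p)
      = hinner w w - qmul (hinner w p) (qconj (hinner w p))"
    by (simp add: hinner_diff_left hinner_diff_right hinner_hlmul_left hinner_hlmul_right pp)
  then show "(norm (w - hlmul (hinner w p) p))^2 = (norm w)^2 - (norm (hinner w p))^2"
    by (simp add: hinner_self qmul_qconj_right vec4_eq_iff)
qed

text \<open>Match the first vectors, then the components of the second vectors orthogonal to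
  them: these have the same length, which is positive because |hinner u w| < 1.\<close>

lemma Sp_maps_pair:
  assumes u: "norm u = 1" and w: "norm w = 1" and p: "norm p = 1" and q: "norm q = 1"
    and pq: "hinner p q = hinner u w" and lt1: "norm (hinner u w) < 1"
  shows "\<exists>f\<in>Sp. f u = p \<and> f w = q"
proof -
  obtain g where g: "g \<in> Sp" "g u = p"
    using Sp_maps_unit[OF u p] by blast
  define k where "k = hinner q p"
  have gw: "hinner (g w) p = k" "norm (g w) = 1"
    using Sp_hinner[OF g(1), of w u] g pq w
    by (simp_all add: k_def hinner_commute[of w u] hinner_commute[of q p] Sp_norm)
  define a where "a = g w - hlmul k p"
  define b where "b = q - hlmul k p"
  have ap: "hinner a p = 0" and bp: "hinner b p = 0"
    using hinner_orthogonal_component[OF p, of "g w"] hinner_orthogonal_component[OF p, of q]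
    by (simp_all add: a_def b_def gw k_def)
  have sq: "(norm a)^2 = 1 - (norm k)^2" "(norm b)^2 = 1 - (norm k)^2"
    using hinner_orthogonal_component[OF p, of "g w"] hinner_orthogonal_component[OF p, of q]
    by (simp_all add: a_def b_def gw k_def q)
  have "(norm k)^2 < 1"
    using lt1 pq by (simp add: k_def hinner_commute[of q p] power_less_one_iff abs_less_iff)
  then have "0 < (norm a)^2"
    using sq by linarith
  then have ab: "norm a = norm b" "norm a > 0"
    using sq power2_eq_iff_nonneg[of "norm a" "norm b"] by auto
  define s where "s = norm a"
  obtain h where h: "h \<in> Sp" "h ((1 / s) *\<^sub>R a) = (1 / s) *\<^sub>R b"
    and h_fix: "\<And>x. hinner x ((1 / s) *\<^sub>R a) = 0 \<Longrightarrow> hinner x ((1 / s) *\<^sub>R b) = 0 \<Longrightarrow> h x = x"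
    using Sp_maps_unit[of "(1 / s) *\<^sub>R a" "(1 / s) *\<^sub>R b"] ab by (auto simp: s_def)
  have hp: "h p = p"
    using ap bp by (intro h_fix)
      (simp_all add: hinner_scaleR_right hinner_commute[of p a] hinner_commute[of p b])
  have "h a = h (s *\<^sub>R ((1 / s) *\<^sub>R a))"
    using ab by (simp add: s_def)
  also have "\<dots> = b"
    using h(2) ab by (simp add: linear_scale[OF Sp_linear[OF h(1)]] s_def)
  finally have "h a = b" .
  then have "h (g w) = q"
    by (simp add: a_def b_def linear_diff[OF Sp_linear[OF h(1)]] Sp_hlmul[OF h(1)] hp)
  then show ?thesis
    using Sp_comp[OF h(1) g(1)] g(2) hp by (intro bexI[of _ "h \<circ> g"]) auto
qed

lemma exists_unit_hinner_orthogonal: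
  fixes x y :: "real^4^'n"
  assumes "CARD('n) \<ge> 3"
  shows "\<exists>e. norm e = 1 \<and> hinner e x = 0 \<and> hinner e y = 0"
proof -
  define T where "T = (\<lambda>e::real^4^'n. (hinner e x, hinner e y))"
  have lin: "linear T"
    by (rule linearI) (simp_all add: T_def hinner_add_left hinner_scaleR_left)
  have "\<not> inj T"
  proof
    assume "inj T"
    then have "dim (UNIV :: (real^4^'n) set) \<le> DIM((real^4) \<times> (real^4))"
      using dim_image_eq[OF lin, of UNIV] dim_subset_UNIV[of "range T"] by simp
    then show False
      using assms by simp
  qed
  then obtain e where e: "e \<noteq> 0" "T e = 0"
    using linear_inj_iff_eq_0[OF lin] by blast
  then show ?thesis
    by (intro exI[of _ "(1 / norm e) *\<^sub>R e"])
      (simp add: T_def hinner_scaleR_left zero_prod_def)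
qed

section \<open>Chains of planes\<close>

definition chained :: "'a::euclidean_space set set \<Rightarrow> 'a \<Rightarrow> 'a \<Rightarrow> bool" where
  "chained G x y \<longleftrightarrow> (\<exists>Ws. Ws \<noteq> [] \<and> set Ws \<subseteq> G \<and> x \<in> hd Ws \<and> y \<in> last Ws \<and>
     successively (\<lambda>P Q. 0 < dim (P \<inter> Q)) Ws)"

lemma transitivity_property_iff_chained:
  "transitivity_property G \<longleftrightarrow> (\<forall>x y. chained G x y)"
  by (simp add: transitivity_property_def chained_def successively_conv_nth)

lemma chained_single: "P \<in> G \<Longrightarrow> x \<in> P \<Longrightarrow> y \<in> P \<Longrightarrow> chained G x y"
  unfolding chained_def by (intro exI[of _ "[P]"]) simp

lemma dim_pos_if_nonzero_mem: "(y::'a::euclidean_space) \<in> S \<Longrightarrow> y \<noteq> 0 \<Longrightarrow> 0 < dim S"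
  using dim_subset[of "{y}" S] by simp

lemma chained_trans:
  assumes "chained G x y" "chained G y z" "y \<noteq> 0"
  shows "chained G x z"
proof -
  obtain A where A: "A \<noteq> []" "set A \<subseteq> G" "x \<in> hd A" "y \<in> last A"
    "successively (\<lambda>P Q. 0 < dim (P \<inter> Q)) A"
    using assms(1) unfolding chained_def by blast
  obtain B where B: "B \<noteq> []" "set B \<subseteq> G" "y \<in> hd B" "z \<in> last B"
    "successively (\<lambda>P Q. 0 < dim (P \<inter> Q)) B"
    using assms(2) unfolding chained_def by blast
  have "0 < dim (last A \<inter> hd B)"
    using A(4) B(3) assms(3) by (intro dim_pos_if_nonzero_mem[of y]) auto
  then show ?thesis
    unfolding chained_def using A B
    by (intro exI[of _ "A @ B"]) (simp add: successively_append_iff)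
qed

lemma chained_scaleR:
  assumes "\<forall>P\<in>G. subspace P" and "chained G x y"
  shows "chained G (a *\<^sub>R x) (b *\<^sub>R y)"
proof -
  obtain Ws where Ws: "Ws \<noteq> []" "set Ws \<subseteq> G" "x \<in> hd Ws" "y \<in> last Ws"
    "successively (\<lambda>P Q. 0 < dim (P \<inter> Q)) Ws"
    using assms(2) unfolding chained_def by blast
  then have "subspace (hd Ws)" "subspace (last Ws)"
    using assms(1) by (auto simp: subset_iff)
  then show ?thesis
    unfolding chained_def using Ws by (intro exI[of _ Ws]) (simp add: subspace_scale)
qed

definition covers_pairs :: "(real^4^'n) set set \<Rightarrow> real^4 \<Rightarrow> bool" where
  "covers_pairs G c \<longleftrightarrow>
     (\<forall>p q. norm p = 1 \<longrightarrow> norm q = 1 \<longrightarrow> hinner p q = c \<longrightarrow> (\<exists>P\<in>G. p \<in> P \<and> q \<in> P))"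

text \<open>The two vectors are joined through z = conj c x + t conj c y + s e with
  t = tan(\<theta>/2) and e orthogonal to x and y: both have Hermitian product c with z, and a
  real s making z a unit vector exists as long as 2 |c|^2 \<le> 1 + cos \<theta>.\<close>

lemma chained_rotation_step:
  fixes x y :: "real^4^'n"
  assumes n: "CARD('n) \<ge> 3" and G: "covers_pairs G c"
    and x: "norm x = 1" and y: "norm y = 1" and xy: "hinner x y = 0"
    and \<theta>: "2 * (norm c)^2 < 1 + cos \<theta>"
  shows "chained G x (cos \<theta> *\<^sub>R x + sin \<theta> *\<^sub>R y)"
proof -
  obtain e :: "real^4^'n" where e: "norm e = 1" "hinner e x = 0" "hinner e y = 0"
    using exists_unit_hinner_orthogonal[OF n] by blast
  have cos_gt: "0 < 1 + cos \<theta>"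
    using \<theta> by (smt (verit) zero_le_power2)
  define t where "t = sin \<theta> / (1 + cos \<theta>)"
  have sin_sq: "(sin \<theta>)^2 = (1 - cos \<theta>) * (1 + cos \<theta>)"
    by (simp add: sin_squared_eq algebra_simps power2_eq_square)
  have t2: "t^2 = (1 - cos \<theta>) / (1 + cos \<theta>)"
    using cos_gt unfolding t_def power_divide sin_sq by (simp add: power2_eq_square)
  have t_sq: "1 + t^2 = 2 / (1 + cos \<theta>)"
    unfolding t2 using cos_gt by (simp add: field_simps)
  have "sin \<theta> * t = (sin \<theta>)^2 / (1 + cos \<theta>)"
    by (simp add: t_def power2_eq_square)
  also have "\<dots> = 1 - cos \<theta>"
    using cos_gt by (simp add: sin_sq)
  finally have t_rot: "cos \<theta> + sin \<theta> * t = 1"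
    by simp
  define s where "s = sqrt (1 - (norm c)^2 * (1 + t^2))"
  have "(norm c)^2 * (1 + t^2) \<le> 1"
    using \<theta> cos_gt by (simp add: t_sq)
  then have s_sq: "s * s = 1 - (norm c)^2 * (1 + t^2)"
    by (simp add: s_def)
  define z where "z = hlmul (qconj c) x + hlmul (t *\<^sub>R qconj c) y + s *\<^sub>R e"
  have unit: "hinner x x = qone" "hinner y y = qone" "hinner e e = qone"
    using x y e(1) by (simp_all add: norm_eq_1_iff_hinner)
  have orth: "hinner x e = 0" "hinner y e = 0" "hinner y x = 0"
    using e(2,3) xy by (simp_all add: hinner_commute[of x e] hinner_commute[of y e]
        hinner_commute[of y x])
  have xz: "hinner x z = c" and yz: "hinner y z = t *\<^sub>R c" and ez: "hinner e z = s *\<^sub>R qone"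
    by (simp_all add: z_def hinner_add_right hinner_hlmul_right hinner_scaleR_right unit orth
        e(2,3) xy qconj_scaleR)
  have "hinner z z = qmul (qconj c) (hinner x z) + qmul (t *\<^sub>R qconj c) (hinner y z)
      + s *\<^sub>R hinner e z"
    by (subst (1) z_def) (simp add: hinner_add_left hinner_hlmul_left hinner_scaleR_left)
  also have "\<dots> = ((norm c)^2 * (1 + t * t) + s * s) *\<^sub>R qone"
    by (simp add: xz yz ez qmul_scaleR_left qmul_scaleR_right qmul_qconj_left
        scaleR_add_left algebra_simps)
  finally have z: "norm z = 1"
    by (simp add: norm_eq_1_iff_hinner s_sq power2_eq_square algebra_simps)
  define x' where "x' = cos \<theta> *\<^sub>R x + sin \<theta> *\<^sub>R y"
  have "hinner x' x' = (cos \<theta> * cos \<theta> + sin \<theta> * sin \<theta>) *\<^sub>R qone"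
    unfolding x'_def by (rule hinner_orthonormal_combination[OF x y xy])
  then have x': "norm x' = 1"
    by (simp add: norm_eq_1_iff_hinner flip: power2_eq_square)
  have "hinner x' z = (cos \<theta> + sin \<theta> * t) *\<^sub>R c"
    by (simp add: x'_def hinner_add_left hinner_scaleR_left xz yz scaleR_add_left)
  then have x'z: "hinner x' z = c"
    by (simp add: t_rot)
  obtain P where "P \<in> G" "x \<in> P" "z \<in> P"
    using G x z xz unfolding covers_pairs_def by blast
  moreover obtain Q where "Q \<in> G" "x' \<in> Q" "z \<in> Q"
    using G x' z x'z unfolding covers_pairs_def by blast
  ultimately have "chained G x z" "chained G z x'"
    by (auto intro: chained_single)
  then show ?thesis
    unfolding x'_def[symmetric] using z by (auto intro: chained_trans)
qed

lemma chained_rotation: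
  fixes x y :: "real^4^'n"
  assumes n: "CARD('n) \<ge> 3" and G: "covers_pairs G c"
    and x: "norm x = 1" and y: "norm y = 1" and xy: "hinner x y = 0"
    and \<theta>: "2 * (norm c)^2 < 1 + cos \<theta>"
  shows "chained G x (cos (real (Suc m) * \<theta>) *\<^sub>R x + sin (real (Suc m) * \<theta>) *\<^sub>R y)"
proof (induction m)
  case 0
  then show ?case
    using chained_rotation_step[OF n G x y xy \<theta>] by simp
next
  case (Suc m)
  define a where "a = real (Suc m) * \<theta>"
  define x' where "x' = cos a *\<^sub>R x + sin a *\<^sub>R y"
  define y' where "y' = (- sin a) *\<^sub>R x + cos a *\<^sub>R y"
  have "hinner x' x' = (cos a * cos a + sin a * sin a) *\<^sub>R qone"
    and "hinner y' y' = ((- sin a) * (- sin a) + cos a * cos a) *\<^sub>R qone"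
    and "hinner x' y' = (cos a * (- sin a) + sin a * cos a) *\<^sub>R qone"
    unfolding x'_def y'_def by (rule hinner_orthonormal_combination[OF x y xy])+
  then have x': "norm x' = 1" and y': "norm y' = 1" and x'y': "hinner x' y' = 0"
    by (simp_all add: norm_eq_1_iff_hinner flip: power2_eq_square)
  have "cos \<theta> *\<^sub>R x' + sin \<theta> *\<^sub>R y'
      = cos (real (Suc (Suc m)) * \<theta>) *\<^sub>R x + sin (real (Suc (Suc m)) * \<theta>) *\<^sub>R y"
  proof -
    have angle: "real (Suc (Suc m)) * \<theta> = a + \<theta>"
      by (simp add: a_def algebra_simps)
    show ?thesis
      unfolding angle cos_add sin_add x'_def y'_def
      by (simp add: scaleR_add_right scaleR_add_left scaleR_diff_left algebra_simps)
  qed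
  moreover have "chained G x x'"
    using Suc by (simp add: x'_def a_def)
  ultimately show ?case
    using chained_rotation_step[OF n G x' y' x'y' \<theta>] x' by (auto intro: chained_trans)
qed

text \<open>Rotating from x towards y in N equal steps of angle \<pi>/(2N), with N so large that each
  step satisfies the hypothesis of the rotation step.\<close>

lemma chained_orthonormal:
  fixes x y :: "real^4^'n"
  assumes n: "CARD('n) \<ge> 3" and G: "covers_pairs G c" and c: "norm c < 1"
    and x: "norm x = 1" and y: "norm y = 1" and xy: "hinner x y = 0"
  shows "chained G x y"
proof -
  have "(\<lambda>N. cos (pi / 2 / real (Suc N))) \<longlonglongrightarrow> cos 0"
    using tendsto_cos[OF LIMSEQ_Suc[OF lim_const_over_n[of "pi / 2"]]] .
  moreover have "2 * (norm c)^2 - 1 < cos 0"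
    using c by (simp add: power_less_one_iff abs_less_iff)
  ultimately have "\<forall>\<^sub>F N in sequentially. 2 * (norm c)^2 - 1 < cos (pi / 2 / real (Suc N))"
    by (rule order_tendstoD(1))
  then obtain N where N: "2 * (norm c)^2 - 1 < cos (pi / 2 / real (Suc N))"
    by (meson eventually_sequentially order_refl)
  then have \<theta>: "2 * (norm c)^2 < 1 + cos (pi / 2 / real (Suc N))"
    by simp
  have angle: "real (Suc N) * (pi / 2 / real (Suc N)) = pi / 2"
    by (simp add: field_simps)
  show ?thesis
    using chained_rotation[OF n G x y xy \<theta>, of N] unfolding angle by simp
qed

section \<open>The orbit of a plane\<close>

lemma subspace_quaternion_line:
  assumes "quaternion_line L"
  shows "subspace L"
proof -
  obtain v where L: "L = {hlmul l v | l. True}"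
    using assms by (auto simp: quaternion_line_def)
  have "L = range (\<lambda>l. hlmul l v)"
    by (auto simp: L)
  moreover have "linear (\<lambda>l. hlmul l v)"
    by (rule linearI) (simp_all add: hlmul_add_left hlmul_scaleR_left)
  ultimately show ?thesis
    by (simp add: linear_subspace_image)
qed

lemma norm_hinner_lt_1:
  assumes u: "norm u = 1" and w: "norm w = 1"
    and not_line: "\<not> (\<exists>L. quaternion_line L \<and> u \<in> L \<and> w \<in> L)"
  shows "norm (hinner u w) < 1"
proof -
  define r where "r = w - hlmul (hinner w u) u"
  have "quaternion_line {hlmul l u | l. True}"
    unfolding quaternion_line_def using u by (intro exI[of _ u]) auto
  moreover have "u \<in> {hlmul l u | l. True}"
    by (metis (mono_tags) hlmul_qone mem_Collect_eq)
  ultimately have "w \<noteq> hlmul (hinner w u) u"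
    using not_line by blast
  then have "r \<noteq> 0"
    by (simp add: r_def)
  moreover have "(norm r)^2 = 1 - (norm (hinner u w))^2"
    using hinner_orthogonal_component(2)[OF u, of w] w
    by (simp add: r_def hinner_commute[of w u])
  ultimately have "(norm (hinner u w))^2 < 1"
    by (smt (verit) zero_less_power2 norm_eq_zero)
  then show ?thesis
    by (simp add: power_less_one_iff abs_less_iff)
qed

lemma subspace_orbit_SpSp1:
  assumes W: "subspace W" and P: "P \<in> orbit_SpSp1 W"
  shows "subspace P"
proof -
  obtain f q where f: "f \<in> Sp" and P_eq: "P = f ` (\<lambda>x. hrmul x q) ` W"
    using P unfolding orbit_SpSp1_def by blast
  have "linear (\<lambda>x. hrmul x q)"
    by (rule linearI) (simp_all add: hrmul_def vec_eq_iff qmul_add_left qmul_scaleR_left)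
  then have "subspace ((\<lambda>x. hrmul x q) ` W)"
    using W by (rule linear_subspace_image)
  then show ?thesis
    unfolding P_eq by (rule linear_subspace_image[OF Sp_linear[OF f]])
qed

lemma Sp_image_in_orbit_SpSp1: "f \<in> Sp \<Longrightarrow> f ` W \<in> orbit_SpSp1 W"
proof -
  have "(\<lambda>x. hrmul x qone) ` W = W"
    by (simp add: hrmul_def)
  then show "f \<in> Sp \<Longrightarrow> f ` W \<in> orbit_SpSp1 W"
    unfolding orbit_SpSp1_def by (intro CollectI exI[of _ f] exI[of _ qone]) auto
qed

lemma covers_pairs_orbit_SpSp1:
  fixes W :: "(real^4^'n) set"
  assumes "u \<in> W" "w \<in> W" "norm u = 1" "norm w = 1" "norm (hinner u w) < 1"
  shows "covers_pairs (orbit_SpSp1 W) (hinner u w)"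
  unfolding covers_pairs_def
proof (intro allI impI)
  fix p q :: "real^4^'n"
  assume pq: "norm p = 1" "norm q = 1" "hinner p q = hinner u w"
  have "\<exists>f\<in>Sp. f u = p \<and> f w = q"
    by (rule Sp_maps_pair[OF assms(3,4) pq assms(5)])
  then obtain f where f: "f \<in> Sp" "f u = p" "f w = q"
    by blast
  then have "p \<in> f ` W" "q \<in> f ` W"
    using assms(1,2) by auto
  then show "\<exists>P\<in>orbit_SpSp1 W. p \<in> P \<and> q \<in> P"
    using Sp_image_in_orbit_SpSp1[OF f(1), of W] by (intro bexI[of _ "f ` W"] conjI)
qed

lemma orbit_SpSp1_covers_vector:
  assumes "subspace W" "u \<in> W" "norm u = 1"
  shows "\<exists>P\<in>orbit_SpSp1 W. v \<in> P"
proof (cases "v = 0")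
  case True
  then show ?thesis
    using Sp_image_in_orbit_SpSp1[OF Sp_id, of W] subspace_0[OF assms(1)]
    by (intro bexI[of _ "id ` W"]) auto
next
  case False
  then have "norm ((1 / norm v) *\<^sub>R v) = 1"
    by simp
  then obtain f where f: "f \<in> Sp" "f u = (1 / norm v) *\<^sub>R v"
    using Sp_maps_unit[OF assms(3)] by blast
  have "f (norm v *\<^sub>R u) = v"
    using f False by (simp add: linear_scale[OF Sp_linear[OF f(1)]])
  moreover have "norm v *\<^sub>R u \<in> W"
    using assms by (simp add: subspace_scale)
  ultimately have "v \<in> f ` W"
    by (metis image_eqI)
  then show ?thesis
    using Sp_image_in_orbit_SpSp1[OF f(1), of W] by (intro bexI[of _ "f ` W"])
qed

lemma chained_everywhere:
  fixes G :: "(real^4^'n) set set"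
  assumes n: "CARD('n) \<ge> 3" and subspaces: "\<forall>P\<in>G. subspace P"
    and covers: "\<And>v. \<exists>P\<in>G. v \<in> P" and G: "covers_pairs G c" and c: "norm c < 1"
  shows "chained G x y"
proof (cases "x = 0 \<or> y = 0")
  case True
  obtain P Q where "P \<in> G" "x \<in> P" "Q \<in> G" "y \<in> Q"
    using covers by blast
  then have "0 \<in> P" "0 \<in> Q"
    using subspaces by (simp_all add: subspace_0)
  with True show ?thesis
    using \<open>P \<in> G\<close> \<open>x \<in> P\<close> \<open>Q \<in> G\<close> \<open>y \<in> Q\<close> by (metis chained_single)
next
  case False
  define x' where "x' = (1 / norm x) *\<^sub>R x"
  define y' where "y' = (1 / norm y) *\<^sub>R y"
  have x': "norm x' = 1" and y': "norm y' = 1"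
    using False by (simp_all add: x'_def y'_def)
  obtain e :: "real^4^'n" where e: "norm e = 1" "hinner e x' = 0" "hinner e y' = 0"
    using exists_unit_hinner_orthogonal[OF n] by blast
  have "chained G x' e"
    using e by (intro chained_orthonormal[OF n G c x' e(1)]) (simp add: hinner_commute[of x' e])
  moreover have "chained G e y'"
    using e by (intro chained_orthonormal[OF n G c e(1) y'])
  ultimately have "chained G x' y'"
    using e(1) by (auto intro: chained_trans)
  then have "chained G (norm x *\<^sub>R x') (norm y *\<^sub>R y')"
    using subspaces by (rule chained_scaleR[rotated])
  then show ?thesis
    using False by (simp add: x'_def y'_def)
qed

theorem proposition11p9:
  fixes W :: "(real^4^'n) set"
  assumes "CARD('n) \<ge> 3"
    and "real_plane W"
    and "\<not> (\<exists>L. quaternion_line L \<and> W \<subseteq> L)"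
  shows "transitivity_property (orbit_SpSp1 W)"
proof -
  have W: "subspace W" "dim W = 2"
    using assms(2) by (simp_all add: real_plane_def)
  obtain B where B: "B \<subseteq> W" "\<And>x. x \<in> B \<Longrightarrow> norm x = 1" "card B = dim W" "span B = W"
    using orthonormal_basis_subspace[OF W(1)] by metis
  obtain u w where uw: "B = {u, w}"
    using B(3) W(2) card_2_iff by metis
  have u: "u \<in> W" "norm u = 1" and w: "w \<in> W" "norm w = 1"
    using B uw by auto
  have "\<not> (\<exists>L. quaternion_line L \<and> u \<in> L \<and> w \<in> L)"
    using assms(3) B(4) uw
    by (metis empty_subsetI insert_subset span_minimal subspace_quaternion_line)
  then have "norm (hinner u w) < 1"
    using u w by (intro norm_hinner_lt_1)
  then have "chained (orbit_SpSp1 W) x y" for x y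
    using assms(1) subspace_orbit_SpSp1[OF W(1)] orbit_SpSp1_covers_vector[OF W(1) u]
      covers_pairs_orbit_SpSp1[OF u(1) w(1) u(2) w(2)]
    by (intro chained_everywhere) auto
  then show ?thesis
    by (simp add: transitivity_property_iff_chained)
qed

end
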